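(* Let $V\subset\mathbb P^5$ be a Veronese surface and $P\subset\mathbb P^5$ a plane such that $V\cap P$ is a (smooth) conic $C$. Then $W=V\cup P$ is a reducible (generalized) surface with one apparent double point, i.e. through a general point of $\mathbb P^5$ there passes exactly one secant line to $W$.
   Context: A Veronese surface is the image of $\mathbb P^2$ in $\mathbb P^5$ under the embedding by the complete linear system of conics. A secant line to $W$ is a line cutting $W$ scheme-theoretically in a reduced scheme of length two. *)

theory Defs
  imports "HOL-Analysis.Analysis" "HOL-Computational_Algebra.Polynomial"
begin

text \<open>Points of P^5 are represented by nonzero vectors of complex^6 (homogeneous
coordinates); subvarieties of P^5 by their affine cones minus the origin.\<close>

inductive polyfun :: "(complex^6 \<Rightarrow> complex) \<Rightarrow> bool" where
  pf_const: "polyfun (\<lambda>x. c)"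
| pf_coord: "polyfun (\<lambda>x. x $ i)"
| pf_add: "polyfun f \<Longrightarrow> polyfun g \<Longrightarrow> polyfun (\<lambda>x. f x + g x)"
| pf_mult: "polyfun f \<Longrightarrow> polyfun g \<Longrightarrow> polyfun (\<lambda>x. f x * g x)"

definition homogeneous_form :: "nat \<Rightarrow> (complex^6 \<Rightarrow> complex) \<Rightarrow> bool" where
  "homogeneous_form d F \<longleftrightarrow> polyfun F \<and> (\<forall>c x. F (c *s x) = c ^ d * F x)"

definition vanishing_form :: "(complex^6) set \<Rightarrow> (complex^6 \<Rightarrow> complex) \<Rightarrow> bool" where
  "vanishing_form W F \<longleftrightarrow> (\<exists>d. homogeneous_form d F) \<and> (\<forall>x\<in>W. F x = 0)"

definition ver :: "complex^3 \<Rightarrow> complex^6" where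
  "ver y = vector [y$1 * y$1, y$2 * y$2, y$3 * y$3, y$1 * y$2, y$1 * y$3, y$2 * y$3]"

definition is_veronese :: "(complex^6) set \<Rightarrow> bool" where
  "is_veronese V \<longleftrightarrow> (\<exists>A :: complex^6^6. invertible A \<and> V = {A *v ver y | y. y \<noteq> 0})"

definition indep3 :: "complex^6 \<Rightarrow> complex^6 \<Rightarrow> complex^6 \<Rightarrow> bool" where
  "indep3 u1 u2 u3 \<longleftrightarrow>
     (\<forall>c1 c2 c3. c1 *s u1 + c2 *s u2 + c3 *s u3 = 0 \<longrightarrow> c1 = 0 \<and> c2 = 0 \<and> c3 = 0)"

definition comb3 :: "complex^6 \<Rightarrow> complex^6 \<Rightarrow> complex^6 \<Rightarrow> complex^3 \<Rightarrow> complex^6" where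
  "comb3 u1 u2 u3 y = y$1 *s u1 + y$2 *s u2 + y$3 *s u3"

definition is_plane :: "(complex^6) set \<Rightarrow> bool" where
  "is_plane P \<longleftrightarrow> (\<exists>u1 u2 u3. indep3 u1 u2 u3 \<and> P = {comb3 u1 u2 u3 y | y. y \<noteq> 0})"

definition smooth_conic_in :: "(complex^6) set \<Rightarrow> (complex^6) set \<Rightarrow> bool" where
  "smooth_conic_in P C \<longleftrightarrow>
     (\<exists>u1 u2 u3 (Q :: complex^3^3). indep3 u1 u2 u3 \<and> P = {comb3 u1 u2 u3 y | y. y \<noteq> 0}
        \<and> transpose Q = Q \<and> invertible Q
        \<and> C = {comb3 u1 u2 u3 y | y. y \<noteq> 0 \<and> (\<Sum>i\<in>UNIV. y$i * (Q *v y)$i) = 0})"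

definition indep2 :: "complex^6 \<Rightarrow> complex^6 \<Rightarrow> bool" where
  "indep2 a b \<longleftrightarrow> (\<forall>c1 c2. c1 *s a + c2 *s b = 0 \<longrightarrow> c1 = 0 \<and> c2 = 0)"

definition line_through :: "complex^6 \<Rightarrow> complex^6 \<Rightarrow> (complex^6) set" where
  "line_through a b = {s *s a + t *s b | s t. True}"

definition simple_at :: "(complex^6) set \<Rightarrow> complex^6 \<Rightarrow> complex^6 \<Rightarrow> bool" where
  "simple_at W p q \<longleftrightarrow>
     (\<exists>F r. vanishing_form W F \<and> (\<forall>t. poly r t = F (p + t *s q)) \<and> order 0 r = 1)"

text \<open>L meets W scheme-theoretically in a reduced scheme of length two: the ideal on
L (= P^1) generated by restrictions of the ideal of W has saturation generated by a
product of two distinct linear forms, i.e. its common zeros are exactly two distinct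
points p, q and the minimal vanishing order at each of them is 1.\<close>
definition secant_line :: "(complex^6) set \<Rightarrow> (complex^6) set \<Rightarrow> bool" where
  "secant_line W L \<longleftrightarrow>
     (\<exists>a b. indep2 a b \<and> L = line_through a b) \<and>
     (\<exists>p q. indep2 p q \<and> p \<in> L \<and> q \<in> L \<and>
        (\<forall>x\<in>L. x \<noteq> 0 \<longrightarrow>
           ((\<forall>F. vanishing_form W F \<longrightarrow> F x = 0) \<longleftrightarrow> (\<exists>c. x = c *s p \<or> x = c *s q)))
        \<and> simple_at W p q \<and> simple_at W q p)"

end

theory Submission
  imports Defs
begin

text \<open>After a projective change of coordinates, points of \<open>P\<^sup>5\<close> are symmetric 3\<times>3 matrices \<open>X\<close>
  and \<open>V\<close> is the locus of rank-one matrices \<open>u u\<^sup>T\<close>. The images of four points of the conic satisfy a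
  linear relation, which puts all the vectors \<open>u\<close> of the conic into a plane \<open>w\<^sup>\<bottom>\<close>; hence
  \<open>P = {X. X w = 0}\<close>.

  Let \<open>\<kappa>(X) = w\<^sup>T X w\<close> and take \<open>X\<close> with \<open>\<kappa>(X) \<noteq> 0\<close> and \<open>det X \<noteq> 0\<close>. A line through \<open>X\<close> cannot
  meet \<open>V\<close> twice (\<open>X\<close> has rank three) nor \<open>P\<close> twice (then \<open>X w = 0\<close>). If it meets \<open>V\<close> in \<open>u u\<^sup>T\<close> and
  \<open>P\<close> in \<open>Y\<close>, with \<open>X = s u u\<^sup>T + t Y\<close>, then \<open>X w = s (u\<^sup>T w) u\<close> and \<open>\<kappa>(X) = s (u\<^sup>T w)\<^sup>2\<close>, which
  determine \<open>s u u\<^sup>T = v v\<^sup>T\<close> for \<open>v = X w / \<surd>\<kappa>(X)\<close>. Conversely, the line through \<open>v v\<^sup>T\<close> and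
  \<open>X - v v\<^sup>T \<in> P\<close> meets \<open>V \<union> P\<close> only in these two points, and reducedly: the products of a
  Gram determinant, resp. a 2\<times>2 minor, with \<open>\<kappa>\<close> lie in the ideal and vanish there to first order.\<close>


section \<open>Bilinear forms and rank-one matrices\<close>

definition dot :: "'a::field^'n \<Rightarrow> 'a^'n \<Rightarrow> 'a" where
  "dot a b = (\<Sum>i\<in>UNIV. a$i * b$i)"

lemma dot_3: "dot a (b :: 'a::field^3) = a$1*b$1 + a$2*b$2 + a$3*b$3"
  by (simp add: dot_def sum_3)

lemma dot_commute: "dot a b = dot b a"
  by (simp add: dot_def mult.commute)

lemma dot_zero [simp]: "dot a 0 = 0" "dot 0 a = 0"
  by (simp_all add: dot_def)

lemma dot_add_right: "dot a (b + c) = dot a b + dot a c"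
  by (simp add: dot_def distrib_left sum.distrib)

lemma dot_add_left: "dot (a + b) c = dot a c + dot b c"
  by (simp add: dot_def distrib_right sum.distrib)

lemma dot_scale_right: "dot a (c *s b) = c * dot a b"
  by (simp add: dot_def sum_distrib_left mult.left_commute)

lemma dot_lincomb3:
  "dot f (a *s x + b *s y + c *s z) = a * dot f x + b * dot f y + c * dot f z"
  by (simp add: dot_add_right dot_scale_right)

lemma dot_axis: "dot f (axis k 1) = (f $ k :: 'a::field)"
proof -
  have "dot f (axis k 1) = (\<Sum>i\<in>UNIV. if i = k then f$i else 0)"
    unfolding dot_def axis_def by (intro sum.cong) auto
  then show ?thesis by simp
qed

lemma dot_matrix_vector_mult: "dot a (M *v b) = dot (transpose M *v a) b"
  unfolding dot_def matrix_vector_mult_def transpose_def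
  by (simp add: sum_distrib_left sum_distrib_right mult_ac) (rule sum.swap)

definition outer :: "'a::field^'n \<Rightarrow> 'a^'n^'n" where
  "outer u = (\<chi> i j. u$i * u$j)"

lemma outer_nth [simp]: "outer u $ i $ j = u$i * u$j"
  by (simp add: outer_def)

lemma outer_scale: "outer (c *s u) $ i $ j = c^2 * outer u $ i $ j"
  by (simp add: power2_eq_square mult_ac)

lemma outer_eq_0_iff: "outer u = 0 \<longleftrightarrow> u = (0 :: 'a::field^'n)"
proof
  assume "outer u = 0"
  then have "u$i * u$i = 0" for i by (metis outer_nth zero_index)
  then show "u = 0" by (simp add: vec_eq_iff)
qed (simp add: vec_eq_iff)

lemma outer_mult: "outer v *v w = dot v w *s v"
  by (simp add: vec_eq_iff matrix_vector_mult_def dot_def sum_distrib_left mult_ac)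

definition bil :: "'a::field^'n^'n \<Rightarrow> 'a^'n \<Rightarrow> 'a^'n \<Rightarrow> 'a" where
  "bil M a b = dot a (M *v b)"

lemma bil_outer: "bil (outer u) a b = dot u a * dot u b"
  by (simp add: bil_def outer_mult dot_scale_right dot_commute)

lemma bil_symmetric: "transpose M = M \<Longrightarrow> bil M a b = bil M b a"
  by (metis bil_def dot_commute dot_matrix_vector_mult)

lemma bil_lincomb3_right:
  "bil M d (a *s x + b *s y + c *s z) = a * bil M d x + b * bil M d y + c * bil M d z"
  by (simp add: bil_def matrix_vector_right_distrib vector_scalar_commute dot_lincomb3)

lemma matrix_lincomb3_mult:
  assumes "\<And>i j. M$i$j = a * M1$i$j + b * M2$i$j + c * M3$i$j"
  shows "M *v x = a *s (M1 *v x) + b *s (M2 *v x) + c *s (M3 *v x)"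
  using assms by (simp add: vec_eq_iff matrix_vector_mult_def sum.distrib sum_distrib_left algebra_simps)

lemma bil_matrix_lincomb3:
  assumes "\<And>i j. M$i$j = a * M1$i$j + b * M2$i$j + c * M3$i$j"
  shows "bil M x y = a * bil M1 x y + b * bil M2 x y + c * bil M3 x y"
  unfolding bil_def matrix_lincomb3_mult[OF assms] by (simp add: dot_lincomb3)

lemma symmetric_rank_one:
  fixes M :: "complex^3^3"
  assumes sym: "\<And>i j. M$i$j = M$j$i"
    and minors: "\<And>i j k l. M$i$k * M$j$l - M$i$l * M$j$k = 0"
  obtains u where "M = outer u"
proof (cases "\<exists>i. M$i$i \<noteq> 0")
  case True
  then obtain i where i: "M$i$i \<noteq> 0" by blast
  define r where "r = csqrt (M$i$i)"
  have r2: "r * r = M$i$i" unfolding r_def using power2_csqrt[of "M$i$i"] by (simp add: power2_eq_square)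
  have "M$j$k = outer ((1 / r) *s (\<chi> j. M$j$i)) $j$k" for j k
  proof -
    have "M$j$k * M$i$i - M$j$i * M$i$k = 0" using minors by blast
    then have "M$j$k = M$j$i * M$k$i / M$i$i" using i sym by (simp add: field_simps)
    then show ?thesis using r2 i by (simp add: field_simps)
  qed
  then have "M = outer ((1 / r) *s (\<chi> j. M$j$i))" unfolding vec_eq_iff by blast
  then show ?thesis by (rule that)
next
  case False
  have "M$j$k = 0" for j k
    using minors[of j j k k] False sym[of j k] by simp
  then have "M = outer 0" by (simp add: vec_eq_iff)
  then show ?thesis by (rule that)
qed

lemma det_outer_add:
  fixes M :: "'a::field^3^3"
  assumes "\<And>i j. M$i$j = outer u $i$j + outer v $i$j" shows "det M = 0"
  using assms by (simp add: det_3 algebra_simps)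

lemma bil_axis: "bil M (axis i 1) (axis j 1) = (M$i$j :: 'a::field)"
proof -
  have "(M *v axis j 1) $ i = (\<Sum>k\<in>UNIV. M$i$k * axis j 1 $ k)"
    by (simp add: matrix_vector_mult_def)
  also have "\<dots> = (\<Sum>k\<in>UNIV. if k = j then M$i$k else 0)"
    by (rule sum.cong) (auto simp: axis_def)
  finally show ?thesis by (simp add: bil_def dot_commute[of "axis i 1"] dot_axis)
qed

lemma symmetric_nonzero_bil_diagonal:
  fixes M :: "complex^3^3"
  assumes sym: "\<And>i j. M$i$j = M$j$i" and "M \<noteq> 0"
  obtains a where "bil M a a \<noteq> 0"
proof (cases "\<exists>i. M$i$i \<noteq> 0")
  case True
  then obtain i where "M$i$i \<noteq> 0" by blast
  then show ?thesis by (intro that[of "axis i 1"]) (simp add: bil_axis)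
next
  case False
  obtain i j where ij: "M$i$j \<noteq> 0" using \<open>M \<noteq> 0\<close> by (auto simp: vec_eq_iff)
  have "bil M (axis i 1 + axis j 1) (axis i 1 + axis j 1) = 2 * M$i$j"
    using False sym[of j i]
    by (simp add: bil_def matrix_vector_right_distrib dot_add_left dot_add_right bil_axis[unfolded bil_def])
  then show ?thesis using ij by (intro that[of "axis i 1 + axis j 1"]) simp
qed

definition lin_indep3 :: "'a::field^3 \<Rightarrow> 'a^3 \<Rightarrow> 'a^3 \<Rightarrow> bool" where
  "lin_indep3 a b c \<longleftrightarrow> (\<forall>x y z. x *s a + y *s b + z *s c = 0 \<longrightarrow> x = 0 \<and> y = 0 \<and> z = 0)"

definition rows3 :: "'a::field^3 \<Rightarrow> 'a^3 \<Rightarrow> 'a^3 \<Rightarrow> 'a^3^3" where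
  "rows3 a b c = vector [a, b, c]"

lemma vector3_eq_0_iff: "(vector [a, b, c] :: 'a::zero^3) = 0 \<longleftrightarrow> a = 0 \<and> b = 0 \<and> c = 0"
  unfolding vec_eq_iff forall_3 by simp

lemma rows3_mult: "rows3 a b c *v x = vector [dot a x, dot b x, dot c x]"
  unfolding vec_eq_iff rows3_def matrix_vector_mult_def dot_def forall_3 by simp

lemma vector_matrix_mult_rows3: "x v* rows3 a b c = x$1 *s a + x$2 *s b + x$3 *s c"
  unfolding vec_eq_iff rows3_def vector_matrix_mult_def by (simp add: sum_3 mult.commute)

lemma inj_matrix_vector_mult_iff_det: "inj ((*v) M) \<longleftrightarrow> det M \<noteq> (0 :: 'a::field)"
  by (metis det_nz_iff_inj_gen matrix_of_matrix_vector_mul matrix_vector_mul_linear_gen)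

lemma lin_indep3_iff_det: "lin_indep3 a b c \<longleftrightarrow> det (rows3 a b c) \<noteq> 0"
proof -
  let ?T = "transpose (rows3 a b c)"
  have "det (rows3 a b c) \<noteq> 0 \<longleftrightarrow> inj ((*v) ?T)"
    using inj_matrix_vector_mult_iff_det[of ?T] det_transpose[of "rows3 a b c"] by argo
  also have "\<dots> \<longleftrightarrow> lin_indep3 a b c"
  proof
    assume inj: "inj ((*v) ?T)"
    show "lin_indep3 a b c" unfolding lin_indep3_def
    proof (intro allI impI)
      fix x y z assume "x *s a + y *s b + z *s c = 0"
      then have "?T *v vector [x, y, z] = ?T *v 0"
        by (simp add: vector_matrix_mult_rows3)
      then have "(vector [x, y, z] :: 'a^3) = 0" using inj by (meson injD)
      then show "x = 0 \<and> y = 0 \<and> z = 0" by (simp add: vector3_eq_0_iff)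
    qed
  next
    assume indep: "lin_indep3 a b c"
    show "inj ((*v) ?T)"
    proof (rule injI)
      fix u v assume "?T *v u = ?T *v v"
      then have "?T *v (u - v) = 0" by (simp add: vector_matrix_mult_diff_distrib)
      then have "(u - v)$1 *s a + (u - v)$2 *s b + (u - v)$3 *s c = 0"
        by (simp add: vector_matrix_mult_rows3)
      then have "(u - v)$1 = 0 \<and> (u - v)$2 = 0 \<and> (u - v)$3 = 0"
        using indep unfolding lin_indep3_def by blast
      then show "u = v" unfolding vec_eq_iff forall_3 by simp
    qed
  qed
  finally show ?thesis by simp
qed

lemma lin_indep3_span:
  assumes "lin_indep3 a b c"
  obtains x y z where "v = x *s a + y *s b + z *s c"
proof -
  have "invertible (transpose (rows3 a b c))"
    using assms by (simp add: lin_indep3_iff_det det_transpose invertible_det_nz)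
  then obtain u where "transpose (rows3 a b c) *v u = v"
    by (metis invertible_eq_bij bij_pointE)
  then have "v = u$1 *s a + u$2 *s b + u$3 *s c" by (simp add: vector_matrix_mult_rows3)
  with that show ?thesis by blast
qed

lemma lin_indep3_dual:
  assumes "lin_indep3 a b c"
  obtains r where "dot a r = x" "dot b r = y" "dot c r = z"
proof -
  have "invertible (rows3 a b c)" using assms by (simp add: lin_indep3_iff_det invertible_det_nz)
  then obtain u where "rows3 a b c *v u = vector [x, y, z]" by (metis invertible_eq_bij bij_pointE)
  then show ?thesis using that unfolding rows3_mult by (metis vector_3)
qed

lemma lin_indep3_orthogonal_eq_0:
  assumes "lin_indep3 a b c" "dot a r = 0" "dot b r = 0" "dot c r = 0"
  shows "r = 0"
proof -
  have "inj ((*v) (rows3 a b c))" using assms(1) by (simp add: lin_indep3_iff_det inj_matrix_vector_mult_iff_det)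
  moreover have "rows3 a b c *v r = rows3 a b c *v 0" using assms by (simp add: rows3_mult vector3_eq_0_iff)
  ultimately show ?thesis by (meson injD)
qed

lemma not_lin_indep3_common_orthogonal:
  assumes "\<not> lin_indep3 a b c"
  obtains r where "r \<noteq> 0" "dot a r = 0" "dot b r = 0" "dot c r = 0"
proof -
  have "\<not> inj ((*v) (rows3 a b c))" using assms by (simp add: lin_indep3_iff_det inj_matrix_vector_mult_iff_det)
  then obtain u v where "u \<noteq> v" "rows3 a b c *v u = rows3 a b c *v v" unfolding inj_def by blast
  then have "rows3 a b c *v (u - v) = 0" "u - v \<noteq> 0" by (simp_all add: matrix_vector_mult_diff_distrib)
  then show ?thesis using that unfolding rows3_mult vector3_eq_0_iff by blast
qed

lemma common_orthogonal2:
  obtains r :: "'a::field^3" where "r \<noteq> 0" "dot a r = 0" "dot b r = 0"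
proof -
  have "(0::'a) *s a + 1 *s b + (-1) *s b = 0" by (simp add: vec_eq_iff)
  then have "\<not> lin_indep3 a b b"
    using lin_indep3_def[THEN iffD1, rule_format, of a b b 0 1 "-1"] by auto
  then show ?thesis using that by (rule not_lin_indep3_common_orthogonal)
qed

lemma in_span2_if_orthogonal:
  fixes v1 v2 :: "'a::field^3"
  assumes indep: "\<And>a b. a *s v1 + b *s v2 = 0 \<Longrightarrow> a = 0 \<and> b = 0"
    and w: "w \<noteq> 0" "dot v1 w = 0" "dot v2 w = 0" and x: "dot x w = 0"
  obtains a b where "x = a *s v1 + b *s v2"
proof -
  have "\<not> lin_indep3 v1 v2 x" using lin_indep3_orthogonal_eq_0 w x by blast
  then obtain p q r where pqr: "p *s v1 + q *s v2 + r *s x = 0" "\<not> (p = 0 \<and> q = 0 \<and> r = 0)"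
    unfolding lin_indep3_def by blast
  have "r \<noteq> 0" using pqr indep by auto
  have coord: "p * v1$i + q * v2$i + r * x$i = 0" for i using pqr(1) by (simp add: vec_eq_iff)
  have "x$i = (- p / r) * v1$i + (- q / r) * v2$i" for i
  proof -
    have "r * x$i + (p * v1$i + q * v2$i) = 0" using coord[of i] by (metis add.commute)
    then have "r * x$i = - (p * v1$i + q * v2$i)" by (rule eq_neg_iff_add_eq_0[THEN iffD2])
    then show ?thesis using \<open>r \<noteq> 0\<close> by (simp add: field_simps)
  qed
  then have "x = (- p / r) *s v1 + (- q / r) *s v2" by (simp add: vec_eq_iff)
  then show ?thesis using that by blast
qed

lemma outer_lincomb3_dependent:
  fixes v v1 v2 v3 :: "'a::field^3"
  assumes comb: "\<And>i j. outer v $i$j = a * outer v1 $i$j + b * outer v2 $i$j + c * outer v3 $i$j"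
    and "b \<noteq> 0" "c \<noteq> 0"
  shows "\<not> lin_indep3 v1 v2 v3"
proof
  assume indep: "lin_indep3 v1 v2 v3"
  obtain r2 where r2: "dot v1 r2 = 0" "dot v2 r2 = 1" "dot v3 r2 = 0" by (rule lin_indep3_dual[OF indep])
  obtain r3 where r3: "dot v1 r3 = 0" "dot v2 r3 = 0" "dot v3 r3 = 1" by (rule lin_indep3_dual[OF indep])
  have "dot v r2 * dot v r3 = 0" "dot v r2 * dot v r2 = b" "dot v r3 * dot v r3 = c"
    using bil_matrix_lincomb3[OF comb, of r2 r3] bil_matrix_lincomb3[OF comb, of r2 r2]
      bil_matrix_lincomb3[OF comb, of r3 r3] r2 r3 by (simp_all add: bil_outer)
  then show False using assms(2,3) by auto
qed

lemma symmetric_annihilator_span: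
  fixes M :: "'a::field_char_0^3^3"
  assumes indep: "\<And>a b. a *s v1 + b *s v2 = 0 \<Longrightarrow> a = 0 \<and> b = 0"
    and w: "w \<noteq> 0" "dot v1 w = 0" "dot v2 w = 0"
    and sym: "\<And>i j. M$i$j = M$j$i" and Mw: "M *v w = 0"
  obtains a b c
  where "\<And>i j. M$i$j = a * outer v1 $i$j + b * outer v2 $i$j + c * (v1$i * v2$j + v2$i * v1$j)"
proof -
  have "\<exists>a b. (\<chi> i. M$i$j) = a *s v1 + b *s v2" for j
  proof -
    have "dot (\<chi> i. M$i$j) w = (M *v w) $ j"
      by (simp add: dot_def matrix_vector_mult_def sym[of _ j])
    then have col_orth: "dot (\<chi> i. M$i$j) w = 0" using Mw by simp
    show ?thesis using in_span2_if_orthogonal[OF indep w col_orth] by blast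
  qed
  then obtain a b where col: "\<And>j. (\<chi> i. M$i$j) = a j *s v1 + b j *s v2" by metis
  have Mab: "M$i$j = a j * v1$i + b j * v2$i" for i j
    using arg_cong[OF col[of j], of "\<lambda>u. u$i"] by simp
  have "M *v w = dot (\<chi> j. a j) w *s v1 + dot (\<chi> j. b j) w *s v2"
    by (simp add: vec_eq_iff matrix_vector_mult_def Mab dot_def sum_distrib_left sum.distrib algebra_simps)
  then have "dot (\<chi> j. a j) w = 0" "dot (\<chi> j. b j) w = 0" using Mw indep by simp_all
  then obtain a1 a2 b1 b2 where a12: "(\<chi> j. a j) = a1 *s v1 + a2 *s v2"
    and b12: "(\<chi> j. b j) = b1 *s v1 + b2 *s v2"
    using in_span2_if_orthogonal[OF indep w] by meson
  have "M$i$j = a1 * outer v1 $i$j + b2 * outer v2 $i$j + ((a2 + b1) / 2) * (v1$i * v2$j + v2$i * v1$j)"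
    for i j
  proof -
    have "a j = a1 * v1$j + a2 * v2$j" "b j = b1 * v1$j + b2 * v2$j" for j
      using a12 b12 unfolding vec_eq_iff by simp_all
    moreover have "M$i$j = (M$i$j + M$j$i) / 2" using sym[of i j] by simp
    ultimately show ?thesis unfolding Mab by (simp add: field_simps)
  qed
  then show ?thesis using that by blast
qed

section \<open>Symmetric matrices as points of \<open>P\<^sup>5\<close>\<close>

lemma exhaust_6:
  fixes x :: 6
  shows "x = 1 \<or> x = 2 \<or> x = 3 \<or> x = 4 \<or> x = 5 \<or> x = 6"
proof (induct x)
  case (of_int z)
  then have "z = 0 \<or> z = 1 \<or> z = 2 \<or> z = 3 \<or> z = 4 \<or> z = 5" by fastforce
  then show ?case by auto
qed

lemma vector_6 [simp]:
  "(vector [a, b, c, d, e, f] :: 'a::zero^6)$1 = a"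
  "(vector [a, b, c, d, e, f] :: 'a::zero^6)$2 = b"
  "(vector [a, b, c, d, e, f] :: 'a::zero^6)$3 = c"
  "(vector [a, b, c, d, e, f] :: 'a::zero^6)$4 = d"
  "(vector [a, b, c, d, e, f] :: 'a::zero^6)$5 = e"
  "(vector [a, b, c, d, e, f] :: 'a::zero^6)$6 = f"
  unfolding vector_def by simp_all

text \<open>The coordinates of \<^const>\<open>ver\<close> identify \<open>\<complex>\<^sup>6\<close> with symmetric 3\<times>3 matrices;
  \<open>sym_index i j\<close> is the coordinate holding the entry \<open>(i, j)\<close>.\<close>

definition sym_index :: "3 \<Rightarrow> 3 \<Rightarrow> 6" where
  "sym_index i j = (if i = 1 \<and> j = 1 then 1 else if i = 2 \<and> j = 2 then 2 else if i = 3 \<and> j = 3 then 3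
     else if (i = 1 \<and> j = 2) \<or> (i = 2 \<and> j = 1) then 4
     else if (i = 1 \<and> j = 3) \<or> (i = 3 \<and> j = 1) then 5 else 6)"

lemma sym_index_simps [simp]:
  "sym_index 1 1 = 1" "sym_index 2 2 = 2" "sym_index 3 3 = 3"
  "sym_index 1 2 = 4" "sym_index 2 1 = 4" "sym_index 1 3 = 5" "sym_index 3 1 = 5"
  "sym_index 2 3 = 6" "sym_index 3 2 = 6"
  by (simp_all add: sym_index_def)

lemma sym_index_commute: "sym_index i j = sym_index j i"
  using exhaust_3[of i] exhaust_3[of j] by auto

lemma sym_index_surj: "\<exists>i j. sym_index i j = k"
  using exhaust_6[of k] by (metis sym_index_simps)

definition sym_mat :: "'a^6 \<Rightarrow> 'a^3^3" where
  "sym_mat z = (\<chi> i j. z $ sym_index i j)"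

lemma sym_mat_nth [simp]: "sym_mat z $ i $ j = z $ sym_index i j"
  by (simp add: sym_mat_def)

lemma sym_mat_commute: "sym_mat z $ i $ j = sym_mat z $ j $ i"
  by (simp add: sym_index_commute)

lemma transpose_sym_mat: "transpose (sym_mat z) = sym_mat z"
  by (simp add: vec_eq_iff transpose_def sym_index_commute)

lemma sym_mat_inject: "sym_mat z = sym_mat z' \<longleftrightarrow> z = z'"
  unfolding vec_eq_iff by (metis sym_index_surj sym_mat_nth)

lemma sym_mat_ver: "sym_mat (ver y) = outer y"
proof -
  have "ver y $ sym_index i j = y$i * y$j" for i j
    using exhaust_3[of i] exhaust_3[of j] by (auto simp: ver_def mult.commute)
  then show ?thesis by (simp add: vec_eq_iff)
qed

section \<open>Conics and the planes they span on the Veronese surface\<close>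

lemma isotropic_vector_exists:
  fixes Q :: "complex^3^3"
  assumes "transpose Q = Q"
  obtains y where "y \<noteq> 0" "bil Q y y = 0"
proof (cases "Q$1$1 = 0")
  case True
  have "bil Q (vector [1, 0, 0]) (vector [1, 0, 0]) = 0"
    using True by (simp add: bil_def dot_3 matrix_vector_mult_def sum_3)
  moreover have "(vector [1, 0, 0] :: complex^3) \<noteq> 0" by (simp add: vector3_eq_0_iff)
  ultimately show ?thesis using that by blast
next
  case False
  have Q21: "Q$2$1 = Q$1$2" using assms unfolding vec_eq_iff transpose_def by simp
  \<comment> \<open>a root of \<open>Q\<^sub>1\<^sub>1 r\<^sup>2 + 2 Q\<^sub>1\<^sub>2 r + Q\<^sub>2\<^sub>2\<close>\<close>
  define r where "r = (- Q$1$2 + csqrt ((Q$1$2)\<^sup>2 - Q$1$1 * Q$2$2)) / Q$1$1"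
  have "Q$1$1 * r\<^sup>2 + 2 * Q$1$2 * r + Q$2$2
      = ((- Q$1$2 + csqrt ((Q$1$2)\<^sup>2 - Q$1$1 * Q$2$2))\<^sup>2 + 2 * Q$1$2 * (- Q$1$2 + csqrt ((Q$1$2)\<^sup>2 - Q$1$1 * Q$2$2))
          + Q$1$1 * Q$2$2) / Q$1$1"
    using False by (simp add: r_def power2_eq_square field_simps)
  also have "\<dots> = 0" by (simp add: power2_eq_square algebra_simps) (simp add: power2_csqrt[unfolded power2_eq_square])
  finally have "bil Q (vector [r, 1, 0]) (vector [r, 1, 0]) = 0"
    using Q21 by (simp add: bil_def dot_3 matrix_vector_mult_def sum_3 algebra_simps power2_eq_square)
  moreover have "(vector [r, 1, 0] :: complex^3) \<noteq> 0" by (simp add: vector3_eq_0_iff)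
  ultimately show ?thesis using that by blast
qed

lemma isotropic_frame:
  fixes Q :: "complex^3^3"
  assumes QT: "transpose Q = Q" and Qi: "invertible Q"
  obtains y0 e c where "y0 \<noteq> 0" "bil Q y0 y0 = 0" "lin_indep3 y0 e c" "bil Q y0 e = 0" "bil Q y0 c = 1"
proof -
  obtain y0 where y0: "y0 \<noteq> 0" "bil Q y0 y0 = 0" using isotropic_vector_exists[OF QT] by blast
  define f where "f = Q *v y0"
  have bil_f: "bil Q y0 x = dot f x" for x
    unfolding f_def bil_def by (metis QT dot_matrix_vector_mult)
  have "f \<noteq> 0"
    using y0(1) inj_matrix_vector_mult[OF Qi] unfolding f_def by (metis injD matrix_vector_mult_0_right)
  then obtain k where k: "f$k \<noteq> 0" by (auto simp: vec_eq_iff)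
  obtain k' where k': "y0$k' \<noteq> 0" using y0(1) by (auto simp: vec_eq_iff)
  define c where "c = (1 / f$k) *s axis k 1"
  \<comment> \<open>orthogonality to \<open>h\<close> keeps \<open>e\<close> off the line of \<open>y0\<close>\<close>
  define h where "h = (axis k' 1 :: complex^3)"
  have fc: "dot f c = 1" using k by (simp add: c_def dot_scale_right dot_axis)
  have hy: "dot h y0 = y0$k'" by (simp add: h_def dot_commute dot_axis)
  obtain e where e: "e \<noteq> 0" "dot f e = 0" "dot h e = 0" by (rule common_orthogonal2)
  have fy: "dot f y0 = 0" using y0(2) bil_f by simp
  have "lin_indep3 y0 e c" unfolding lin_indep3_def
  proof (intro allI impI)
    fix x y z assume eq: "x *s y0 + y *s e + z *s c = 0"
    have "z = 0" using arg_cong[OF eq, of "dot f"] by (simp add: dot_lincomb3 fy e(2) fc)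
    moreover have "x = 0" using arg_cong[OF eq, of "dot h"] k' \<open>z = 0\<close> by (simp add: dot_add_right dot_scale_right hy e(3))
    moreover have "y = 0" using eq e(1) \<open>x = 0\<close> \<open>z = 0\<close> by (simp add: vector_mul_eq_0)
    ultimately show "x = 0 \<and> y = 0 \<and> z = 0" by simp
  qed
  then show ?thesis using that y0 e(2) fc bil_f by simp
qed

lemma conic_four_points:
  fixes Q :: "complex^3^3"
  assumes QT: "transpose Q = Q" and "invertible Q"
  obtains y0 y1 y2 k where "lin_indep3 y0 y1 y2"
    "bil Q y0 y0 = 0" "bil Q y1 y1 = 0" "bil Q y2 y2 = 0"
    "bil Q (k *s y0 + 2 *s y1 + (-1) *s y2) (k *s y0 + 2 *s y1 + (-1) *s y2) = 0"
proof -
  obtain y0 e c where y0: "y0 \<noteq> 0" "bil Q y0 y0 = 0" and iec: "lin_indep3 y0 e c"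
    and ye: "bil Q y0 e = 0" and yc: "bil Q y0 c = 1"
    using isotropic_frame[OF assms] by blast
  have bil_lincomb3_left: "bil Q (a *s x + b *s y + d *s z) u = a * bil Q x u + b * bil Q y u + d * bil Q z u"
    for a b d x y z u by (metis QT bil_symmetric bil_lincomb3_right)
  \<comment> \<open>\<open>Y\<close> parametrises the conic; \<open>al\<close> is quadratic, so \<open>Y (-1) - 2 Y 0 + Y 1\<close> is a multiple of \<open>y0\<close>\<close>
  define al where "al s = - (s\<^sup>2 * bil Q e e + bil Q c c + 2 * s * bil Q e c) / 2" for s
  define Y where "Y s = al s *s y0 + s *s e + 1 *s c" for s
  have isotropic: "bil Q (Y s) (Y s) = 0" for s
  proof -
    have "bil Q (Y s) (Y s) = 2 * al s + s\<^sup>2 * bil Q e e + 2 * s * bil Q e c + bil Q c c"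
      unfolding Y_def bil_lincomb3_left bil_lincomb3_right
      using y0(2) ye yc bil_symmetric[OF QT, of e y0] bil_symmetric[OF QT, of c y0] bil_symmetric[OF QT, of c e]
      by (simp add: algebra_simps power2_eq_square)
    also have "\<dots> = 0" unfolding al_def by (simp add: field_simps)
    finally show ?thesis .
  qed
  have "lin_indep3 y0 (Y 0) (Y 1)" unfolding lin_indep3_def
  proof (intro allI impI)
    fix x y z assume "x *s y0 + y *s Y 0 + z *s Y 1 = 0"
    moreover have "x *s y0 + y *s Y 0 + z *s Y 1 = (x + y * al 0 + z * al 1) *s y0 + z *s e + (y + z) *s c"
      unfolding Y_def by (simp add: vec_eq_iff algebra_simps)
    ultimately have "x + y * al 0 + z * al 1 = 0 \<and> z = 0 \<and> y + z = 0"
      using iec unfolding lin_indep3_def by metis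
    then show "x = 0 \<and> y = 0 \<and> z = 0" by auto
  qed
  moreover have "Y (-1) = (al (-1) - 2 * al 0 + al 1) *s y0 + 2 *s Y 0 + (-1) *s Y 1"
    unfolding Y_def by (simp add: vec_eq_iff algebra_simps)
  ultimately show ?thesis using that y0(2) isotropic by metis
qed

text \<open>The images \<open>v\<^sub>i v\<^sub>i\<^sup>T\<close> of four conic points satisfy a linear relation, which makes
  \<open>v\<^sub>1, v\<^sub>2, v\<^sub>3\<close> dependent.\<close>

lemma rank_one_on_conic_common_orthogonal:
  fixes \<phi> :: "complex^3 \<Rightarrow> complex^3^3" and Q :: "complex^3^3"
  assumes lin: "\<And>a b c x y z i j.
      \<phi> (a *s x + b *s y + c *s z) $i$j = a * \<phi> x $i$j + b * \<phi> y $i$j + c * \<phi> z $i$j"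
    and rank_one: "\<And>y. y \<noteq> 0 \<Longrightarrow> bil Q y y = 0 \<Longrightarrow> \<exists>v. \<phi> y = outer v"
    and QT: "transpose Q = Q" and Qi: "invertible Q"
  obtains y0 y1 y2 v1 v2 v3 w where "lin_indep3 y0 y1 y2"
    "\<phi> y0 = outer v1" "\<phi> y1 = outer v2" "\<phi> y2 = outer v3"
    "w \<noteq> 0" "dot v1 w = 0" "dot v2 w = 0" "dot v3 w = 0"
proof -
  obtain y0 y1 y2 k where indep: "lin_indep3 y0 y1 y2"
    and iso: "bil Q y0 y0 = 0" "bil Q y1 y1 = 0" "bil Q y2 y2 = 0"
    and iso3: "bil Q (k *s y0 + 2 *s y1 + (-1) *s y2) (k *s y0 + 2 *s y1 + (-1) *s y2) = 0"
    by (rule conic_four_points[OF QT Qi])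
  have nonzero: "y0 \<noteq> 0" "y1 \<noteq> 0" "y2 \<noteq> 0" "k *s y0 + 2 *s y1 + (-1) *s y2 \<noteq> 0"
    using indep[unfolded lin_indep3_def, rule_format, of 1 0 0]
      indep[unfolded lin_indep3_def, rule_format, of 0 1 0]
      indep[unfolded lin_indep3_def, rule_format, of 0 0 1]
      indep[unfolded lin_indep3_def, rule_format, of k 2 "-1"] by auto
  obtain v1 v2 v3 v4 where v: "\<phi> y0 = outer v1" "\<phi> y1 = outer v2" "\<phi> y2 = outer v3"
    and v4: "\<phi> (k *s y0 + 2 *s y1 + (-1) *s y2) = outer v4"
    using rank_one iso iso3 nonzero by metis
  have "\<not> lin_indep3 v1 v2 v3"
    by (rule outer_lincomb3_dependent[of v4 k v1 2 v2 "-1" v3]) (metis lin v v4, simp_all)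
  then obtain w where "w \<noteq> 0" "dot v1 w = 0" "dot v2 w = 0" "dot v3 w = 0"
    by (rule not_lin_indep3_common_orthogonal)
  then show ?thesis using that indep v by blast
qed

text \<open>The image of \<open>\<phi>\<close> is spanned by \<open>v\<^sub>1 v\<^sub>1\<^sup>T\<close>, \<open>v\<^sub>2 v\<^sub>2\<^sup>T\<close> and \<open>v\<^sub>1 v\<^sub>2\<^sup>T + v\<^sub>2 v\<^sub>1\<^sup>T\<close>, and so is
  the space of symmetric matrices annihilating \<open>w\<close>.\<close>

lemma rank_one_on_conic_imp_annihilator:
  fixes \<phi> :: "complex^3 \<Rightarrow> complex^3^3" and Q :: "complex^3^3"
  assumes lin: "\<And>a b c x y z i j.
      \<phi> (a *s x + b *s y + c *s z) $i$j = a * \<phi> x $i$j + b * \<phi> y $i$j + c * \<phi> z $i$j"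
    and inj: "\<And>y. (\<And>i j. \<phi> y $i$j = 0) \<Longrightarrow> y = 0"
    and sym: "\<And>y i j. \<phi> y $i$j = \<phi> y $j$i"
    and rank_one: "\<And>y. y \<noteq> 0 \<Longrightarrow> bil Q y y = 0 \<Longrightarrow> \<exists>v. \<phi> y = outer v"
    and QT: "transpose Q = Q" and Qi: "invertible Q"
  obtains w where "w \<noteq> 0" "\<And>M. (\<exists>y. M = \<phi> y) \<longleftrightarrow> (\<forall>i j. M$i$j = M$j$i) \<and> M *v w = 0"
proof -
  obtain y0 y1 y2 v1 v2 v3 w where indep: "lin_indep3 y0 y1 y2"
    and v: "\<phi> y0 = outer v1" "\<phi> y1 = outer v2" "\<phi> y2 = outer v3"
    and w: "w \<noteq> 0" "dot v1 w = 0" "dot v2 w = 0" "dot v3 w = 0"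
    by (rule rank_one_on_conic_common_orthogonal[OF lin rank_one QT Qi])
  have lin_v: "\<phi> (a *s y0 + b *s y1 + c *s y2) $i$j = a * outer v1 $i$j + b * outer v2 $i$j + c * outer v3 $i$j"
    for a b c i j using lin v by simp
  have kernel: "a = 0 \<and> b = 0 \<and> c = 0"
    if "\<And>i j. a * outer v1 $i$j + b * outer v2 $i$j + c * outer v3 $i$j = 0" for a b c
    using inj[of "a *s y0 + b *s y1 + c *s y2"] lin_v that indep unfolding lin_indep3_def by metis
  have indep12: "a = 0 \<and> b = 0" if "a *s v1 + b *s v2 = 0" for a b
  proof -
    have "a *s v1 = (- b) *s v2" using that by (simp add: eq_neg_iff_add_eq_0)
    then have "outer (a *s v1) $i$j = outer ((- b) *s v2) $i$j" for i j by simp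
    then have "a\<^sup>2 * outer v1 $i$j + (- b\<^sup>2) * outer v2 $i$j + 0 * outer v3 $i$j = 0" for i j
      unfolding outer_scale by simp
    from kernel[OF this] show ?thesis by simp
  qed
  obtain \<alpha> \<beta> where v3: "v3 = \<alpha> *s v1 + \<beta> *s v2"
    by (rule in_span2_if_orthogonal[OF indep12 w(1-3) w(4)])
  have outer_v3: "outer v3 $i$j = \<alpha>\<^sup>2 * outer v1 $i$j + \<beta>\<^sup>2 * outer v2 $i$j + \<alpha> * \<beta> * (v1$i * v2$j + v2$i * v1$j)"
    for i j unfolding v3 by (simp add: algebra_simps power2_eq_square)
  have "\<alpha> \<noteq> 0"
  proof
    assume "\<alpha> = 0"
    then have "0 * outer v1 $i$j + (- \<beta>\<^sup>2) * outer v2 $i$j + 1 * outer v3 $i$j = 0" for i j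
      using outer_v3[of i j] by simp
    from kernel[OF this] show False by simp
  qed
  have "\<beta> \<noteq> 0"
  proof
    assume "\<beta> = 0"
    then have "(- \<alpha>\<^sup>2) * outer v1 $i$j + 0 * outer v2 $i$j + 1 * outer v3 $i$j = 0" for i j
      using outer_v3[of i j] by simp
    from kernel[OF this] show False by simp
  qed
  \<comment> \<open>the symmetrised product of \<open>v1\<close> and \<open>v2\<close> also lies in the image\<close>
  define ys where "ys = (- \<alpha>\<^sup>2 / (\<alpha> * \<beta>)) *s y0 + (- \<beta>\<^sup>2 / (\<alpha> * \<beta>)) *s y1 + (1 / (\<alpha> * \<beta>)) *s y2"
  have \<phi>_ys: "\<phi> ys $i$j = v1$i * v2$j + v2$i * v1$j" for i j
    unfolding ys_def lin_v outer_v3 using \<open>\<alpha> \<noteq> 0\<close> \<open>\<beta> \<noteq> 0\<close> by (simp add: field_simps power2_eq_square)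
  show ?thesis
  proof (rule that[OF w(1)], intro iffI conjI allI; (elim exE conjE)?)
    fix M y assume M: "M = \<phi> y"
    then show "M$i$j = M$j$i" for i j using sym by simp
    obtain a b c where "y = a *s y0 + b *s y1 + c *s y2" by (rule lin_indep3_span[OF indep])
    then have "\<phi> y *v w = a *s (outer v1 *v w) + b *s (outer v2 *v w) + c *s (outer v3 *v w)"
      by (intro matrix_lincomb3_mult) (simp add: lin_v)
    then show "M *v w = 0" using M w by (simp add: outer_mult)
  next
    fix M :: "complex^3^3" assume M_sym: "\<forall>i j. M$i$j = M$j$i" and Mw: "M *v w = 0"
    obtain a b c where
      M: "\<And>i j. M$i$j = a * outer v1 $i$j + b * outer v2 $i$j + c * (v1$i * v2$j + v2$i * v1$j)"
      using symmetric_annihilator_span[OF indep12 w(1-3) M_sym[rule_format] Mw] by blast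
    have "M$i$j = \<phi> (a *s y0 + b *s y1 + c *s ys) $i$j" for i j
      unfolding lin v \<phi>_ys M ..
    then have "M = \<phi> (a *s y0 + b *s y1 + c *s ys)" by (simp add: vec_eq_iff)
    then show "\<exists>y. M = \<phi> y" by blast
  qed
qed

lemma comb3_lincomb3:
  "comb3 u1 u2 u3 (a *s x + b *s y + c *s z) =
     a *s comb3 u1 u2 u3 x + b *s comb3 u1 u2 u3 y + c *s comb3 u1 u2 u3 z"
  by (simp add: comb3_def vec_eq_iff algebra_simps)

lemma comb3_eq_0_iff:
  assumes "indep3 u1 u2 u3" shows "comb3 u1 u2 u3 y = 0 \<longleftrightarrow> y = 0"
proof
  assume "comb3 u1 u2 u3 y = 0"
  then have "y$1 = 0 \<and> y$2 = 0 \<and> y$3 = 0" using assms unfolding indep3_def comb3_def by blast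
  then show "y = 0" unfolding vec_eq_iff forall_3 by simp
qed (simp add: comb3_def)

lemma conic_plane_annihilator:
  fixes A B :: "complex^6^6"
  assumes BA: "B ** A = mat 1" and AB: "A ** B = mat 1"
    and V: "V = {A *v ver y | y. y \<noteq> 0}" and C: "smooth_conic_in P (V \<inter> P)"
  obtains w where "w \<noteq> 0" "\<And>z. z \<in> P \<longleftrightarrow> z \<noteq> 0 \<and> sym_mat (B *v z) *v w = 0"
proof -
  obtain u1 u2 u3 Q where ind: "indep3 u1 u2 u3" and P: "P = {comb3 u1 u2 u3 y | y. y \<noteq> 0}"
    and QT: "transpose Q = Q" and Qi: "invertible Q"
    and VP: "V \<inter> P = {comb3 u1 u2 u3 y | y. y \<noteq> 0 \<and> (\<Sum>i\<in>UNIV. y$i * (Q *v y)$i) = 0}"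
    using C unfolding smooth_conic_in_def by blast
  have B_inj: "B *v z = B *v z' \<longleftrightarrow> z = z'" for z z'
    by (metis AB matrix_vector_mul_assoc matrix_vector_mul_lid)
  then have B_eq_0: "B *v z = 0 \<longleftrightarrow> z = 0" for z by (metis matrix_vector_mult_0_right)
  define \<phi> where "\<phi> y = sym_mat (B *v comb3 u1 u2 u3 y)" for y
  have lin: "\<phi> (a *s x + b *s y + c *s z) $i$j = a * \<phi> x $i$j + b * \<phi> y $i$j + c * \<phi> z $i$j"
    for a b c x y z i j
    unfolding \<phi>_def comb3_lincomb3 by (simp add: matrix_vector_right_distrib vector_scalar_commute)
  have inj: "y = 0" if "\<And>i j. \<phi> y $i$j = 0" for y
  proof -
    have "sym_mat (B *v comb3 u1 u2 u3 y) = sym_mat (B *v 0)"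
      using that unfolding \<phi>_def by (simp add: vec_eq_iff)
    then show ?thesis using ind by (simp add: sym_mat_inject B_eq_0 comb3_eq_0_iff)
  qed
  have rank_one: "\<exists>v. \<phi> y = outer v" if "y \<noteq> 0" "bil Q y y = 0" for y
  proof -
    have "comb3 u1 u2 u3 y \<in> V \<inter> P"
      unfolding VP using that by (auto simp: bil_def dot_def)
    then obtain v where "comb3 u1 u2 u3 y = A *v ver v" using V by blast
    then have "B *v comb3 u1 u2 u3 y = ver v" using BA by (simp add: matrix_vector_mul_assoc)
    then show ?thesis by (auto simp: \<phi>_def sym_mat_ver)
  qed
  have sym: "\<phi> y $i$j = \<phi> y $j$i" for y i j
    unfolding \<phi>_def by (rule sym_mat_commute)
  obtain w where w: "w \<noteq> 0" and image: "\<And>M. (\<exists>y. M = \<phi> y) \<longleftrightarrow> (\<forall>i j. M$i$j = M$j$i) \<and> M *v w = 0"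
    using rank_one_on_conic_imp_annihilator[OF lin inj sym rank_one QT Qi] by blast
  have "z \<in> P \<longleftrightarrow> z \<noteq> 0 \<and> sym_mat (B *v z) *v w = 0" for z
  proof -
    have "z \<in> P \<longleftrightarrow> z \<noteq> 0 \<and> (\<exists>y. z = comb3 u1 u2 u3 y)"
      unfolding P using ind comb3_eq_0_iff by auto
    also have "(\<exists>y. z = comb3 u1 u2 u3 y) \<longleftrightarrow> (\<exists>y. sym_mat (B *v z) = \<phi> y)"
      by (simp add: \<phi>_def sym_mat_inject B_inj)
    also have "\<dots> \<longleftrightarrow> sym_mat (B *v z) *v w = 0"
      using image sym_mat_commute by blast
    finally show ?thesis by blast
  qed
  then show ?thesis using that w by blast
qed

lemma polyfun_diff:
  assumes "polyfun f" "polyfun g" shows "polyfun (\<lambda>x. f x - g x)"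
proof -
  have "polyfun (\<lambda>x. f x + (- 1) * g x)" by (intro pf_add pf_mult assms pf_const)
  then show ?thesis by simp
qed

lemma polyfun_sum: "(\<And>i. i \<in> S \<Longrightarrow> polyfun (f i)) \<Longrightarrow> polyfun (\<lambda>x. \<Sum>i\<in>S. f i x)"
proof (induction S rule: infinite_finite_induct)
  case (insert a S)
  then have "polyfun (\<lambda>x. f a x + (\<Sum>i\<in>S. f i x))" by (intro pf_add) auto
  then show ?case using insert by simp
qed (use pf_const in auto)

lemma polyfun_matrix_vector_mult_nth: "polyfun (\<lambda>x. (B *v x) $ k)"
  unfolding matrix_vector_mult_def by (simp, intro polyfun_sum pf_mult pf_const pf_coord)

lemma polyfun_sym_mat_nth: "polyfun (\<lambda>x. sym_mat (B *v x) $ i $ j)"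
  by (simp add: polyfun_matrix_vector_mult_nth)

context
  fixes M :: "complex^6 \<Rightarrow> complex^3^3"
  assumes entries: "\<And>i j. polyfun (\<lambda>x. M x $ i $ j)"
begin

lemma polyfun_bil: "polyfun (\<lambda>x. bil (M x) a b)"
  unfolding bil_def dot_def matrix_vector_mult_def
  by (simp, intro polyfun_sum pf_mult pf_const entries)

lemma polyfun_matrix_vector_mult: "polyfun (\<lambda>x. (M x *v w) $ k)"
  unfolding matrix_vector_mult_def by (simp, intro polyfun_sum pf_mult pf_const entries)

lemma polyfun_det3: "polyfun (\<lambda>x. det (M x))"
  unfolding det_3 by (intro polyfun_diff pf_add pf_mult entries)

end

lemma homogeneous_form_mult:
  "homogeneous_form d F \<Longrightarrow> homogeneous_form e G \<Longrightarrow> homogeneous_form (d + e) (\<lambda>x. F x * G x)"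
  unfolding homogeneous_form_def by (auto intro: pf_mult simp: power_add)

lemma vanishing_form_mult_union:
  assumes "homogeneous_form d F" "homogeneous_form e G" "\<And>x. x \<in> V \<Longrightarrow> F x = 0" "\<And>x. x \<in> P \<Longrightarrow> G x = 0"
  shows "vanishing_form (V \<union> P) (\<lambda>x. F x * G x)"
  using homogeneous_form_mult[OF assms(1,2)] assms(3,4) unfolding vanishing_form_def by auto

lemma vanishing_form_scale:
  "vanishing_form W F \<Longrightarrow> z \<in> W \<Longrightarrow> F (c *s z) = 0"
  unfolding vanishing_form_def homogeneous_form_def by auto

lemma order_0_linear_factor:
  fixes r :: "'a::idom poly"
  assumes "poly r 0 \<noteq> 0" shows "order 0 ([:0, 1:] * r) = 1"
proof -
  have "r \<noteq> 0" using assms by auto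
  then have "order 0 ([:0, 1:] * r) = order 0 [:0, 1::'a:] + order 0 r"
    by (intro order_mult) (simp add: pCons_eq_0_iff)
  moreover have "order 0 r = 0" using assms by (simp add: order_root)
  moreover have "order 0 [:0, 1::'a:] = 1" using order_power_n_n[of 0 1] by simp
  ultimately show ?thesis by simp
qed

lemma line_through_commute: "line_through p q = line_through q p"
  unfolding line_through_def by (auto; metis add.commute)

lemma lincomb_in_line_through: "s *s p + t *s q \<in> line_through p q"
  unfolding line_through_def by blast

lemma line_through_subset:
  assumes "p \<in> line_through a b" "q \<in> line_through a b"
  shows "line_through p q \<subseteq> line_through a b"
proof
  fix x assume "x \<in> line_through p q"
  then obtain s t where x: "x = s *s p + t *s q" unfolding line_through_def by blast
  obtain a1 b1 a2 b2 where "p = a1 *s a + b1 *s b" "q = a2 *s a + b2 *s b"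
    using assms unfolding line_through_def by blast
  then have "x = (s * a1 + t * a2) *s a + (s * b1 + t * b2) *s b"
    unfolding x by (simp add: vec_eq_iff algebra_simps)
  then show "x \<in> line_through a b" unfolding line_through_def by blast
qed

lemma line_through_scale:
  assumes "s \<noteq> 0" "t \<noteq> 0" shows "line_through (s *s p) (t *s q) = line_through p q"
proof (intro equalityI line_through_subset)
  show "s *s p \<in> line_through p q" "t *s q \<in> line_through p q"
    using lincomb_in_line_through[of s p 0 q] lincomb_in_line_through[of 0 p t q] by simp_all
  show "p \<in> line_through (s *s p) (t *s q)" "q \<in> line_through (s *s p) (t *s q)"
    using lincomb_in_line_through[of "1 / s" "s *s p" 0 "t *s q"]
      lincomb_in_line_through[of 0 "s *s p" "1 / t" "t *s q"] assms
    by (simp_all add: vector_smult_assoc)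
qed

lemma indep2_nonzero: "indep2 a b \<Longrightarrow> a \<noteq> 0 \<and> b \<noteq> 0"
  unfolding indep2_def
  by (metis one_neq_zero add_0 add.commute vector_smult_lzero vector_smult_lid vector_smult_rzero)

lemma line_through_eq:
  assumes ab: "indep2 a b" and pq: "indep2 p q"
    and p: "p \<in> line_through a b" and q: "q \<in> line_through a b"
  shows "line_through a b = line_through p q"
proof -
  obtain a1 b1 a2 b2 where p1: "p = a1 *s a + b1 *s b" and q1: "q = a2 *s a + b2 *s b"
    using p q unfolding line_through_def by blast
  define D where "D = a1 * b2 - a2 * b1"
  have Da: "b2 *s p + (- b1) *s q = D *s a" and Db: "(- a2) *s p + a1 *s q = D *s b"
    unfolding p1 q1 D_def by (simp_all add: vec_eq_iff algebra_simps)
  have "D \<noteq> 0"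
  proof
    assume "D = 0"
    then have "b2 = 0 \<and> b1 = 0" "a2 = 0 \<and> a1 = 0"
      using Da Db pq unfolding indep2_def by (metis neg_equal_0_iff_equal vector_smult_lzero)+
    then show False using indep2_nonzero[OF pq] p1 by simp
  qed
  have "a = (b2 / D) *s p + (- b1 / D) *s q" "b = (- a2 / D) *s p + (a1 / D) *s q"
    using arg_cong[OF Da, of "(*s) (1 / D)"] arg_cong[OF Db, of "(*s) (1 / D)"] \<open>D \<noteq> 0\<close>
    by (simp_all add: vector_add_ldistrib vector_smult_assoc)
  then have "a \<in> line_through p q" "b \<in> line_through p q"
    using lincomb_in_line_through by metis+
  then show ?thesis using line_through_subset[OF p q] line_through_subset by blast
qed

lemma secant_line_endpoints:
  assumes "secant_line W L"
  obtains p q where "indep2 p q" "L = line_through p q"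
    "\<And>F. vanishing_form W F \<Longrightarrow> F p = 0" "\<And>F. vanishing_form W F \<Longrightarrow> F q = 0"
proof -
  obtain a b p q where ab: "indep2 a b" "L = line_through a b" and pq: "indep2 p q" "p \<in> L" "q \<in> L"
    and zeros: "\<forall>x\<in>L. x \<noteq> 0 \<longrightarrow> ((\<forall>F. vanishing_form W F \<longrightarrow> F x = 0) \<longleftrightarrow> (\<exists>c. x = c *s p \<or> x = c *s q))"
    using assms unfolding secant_line_def by blast
  have "L = line_through p q" using line_through_eq[OF ab(1) pq(1)] pq(2,3) ab(2) by simp
  moreover have "p = 1 *s p" "q = 1 *s q" by simp_all
  ultimately show ?thesis
    using that[OF pq(1)] zeros pq(2,3) indep2_nonzero[OF pq(1)] by metis
qed

section \<open>The secant line through a general point\<close>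

lemma nonisotropic_diagonal_exists:
  fixes w :: "complex^3"
  assumes "w \<noteq> 0"
  obtains d :: "3 \<Rightarrow> complex"
  where "d 1 * d 2 * d 3 \<noteq> 0" "d 1 * (w$1)\<^sup>2 + d 2 * (w$2)\<^sup>2 + d 3 * (w$3)\<^sup>2 \<noteq> 0"
proof (cases "(w$1)\<^sup>2 + (w$2)\<^sup>2 + (w$3)\<^sup>2 = 0")
  case False
  then show ?thesis by (intro that[of "\<lambda>_. 1"]) simp_all
next
  case True
  obtain k where k: "w$k \<noteq> 0" using assms by (auto simp: vec_eq_iff)
  define d :: "3 \<Rightarrow> complex" where "d i = (if i = k then 2 else 1)" for i
  have "d 1 * (w$1)\<^sup>2 + d 2 * (w$2)\<^sup>2 + d 3 * (w$3)\<^sup>2 = (w$k)\<^sup>2 + ((w$1)\<^sup>2 + (w$2)\<^sup>2 + (w$3)\<^sup>2)"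
    using exhaust_3[of k] by (elim disjE) (simp_all add: d_def algebra_simps)
  then show ?thesis using True k by (intro that[of d]) (simp_all add: d_def)
qed

text \<open>Here \<open>B = A\<^sup>-\<^sup>1\<close>; in the coordinates \<open>X z = sym_mat (B *v z)\<close> the surface \<open>V\<close> is the locus of
  rank-one matrices and \<open>P\<close> consists of the matrices annihilating \<open>w\<close>.\<close>

locale veronese_conic_plane =
  fixes A B :: "complex^6^6" and w :: "complex^3" and V P :: "(complex^6) set"
  assumes BA: "B ** A = mat 1" and AB: "A ** B = mat 1"
    and V_def: "V = {A *v ver y | y. y \<noteq> 0}"
    and w_nonzero: "w \<noteq> 0" and mem_P_iff: "\<And>z. z \<in> P \<longleftrightarrow> z \<noteq> 0 \<and> sym_mat (B *v z) *v w = 0"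
begin

definition X :: "complex^6 \<Rightarrow> complex^3^3" where
  "X z = sym_mat (B *v z)"

definition kappa :: "complex^6 \<Rightarrow> complex" where
  "kappa z = bil (X z) w w"

lemma X_lincomb: "X (s *s a + t *s b) $i$j = s * X a $i$j + t * X b $i$j"
  by (simp add: X_def matrix_vector_right_distrib vector_scalar_commute)

lemma X_scale: "X (c *s a) $i$j = c * X a $i$j"
  using X_lincomb[of c a 0 a] by simp

lemma X_diff: "X (a - b) $i$j = X a $i$j - X b $i$j"
  by (simp add: X_def matrix_vector_mult_diff_distrib)

lemma X_symmetric: "X z $i$j = X z $j$i"
  unfolding X_def by (rule sym_mat_commute)

lemma transpose_X: "transpose (X z) = X z"
  unfolding X_def by (rule transpose_sym_mat)

lemma X_inject: "X z = X z' \<longleftrightarrow> z = z'"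
  unfolding X_def sym_mat_inject by (metis AB matrix_vector_mul_assoc matrix_vector_mul_lid)

lemma X_eq_0_iff: "X z = 0 \<longleftrightarrow> z = 0"
proof -
  have "X 0 = 0" by (simp add: X_def vec_eq_iff)
  then show ?thesis by (metis X_inject)
qed

lemma X_ver: "X (A *v ver u) = outer u"
  using BA by (simp add: X_def matrix_vector_mul_assoc sym_mat_ver)

lemma mem_V_iff: "z \<in> V \<longleftrightarrow> (\<exists>u. u \<noteq> 0 \<and> X z = outer u)"
proof
  assume "z \<in> V"
  then show "\<exists>u. u \<noteq> 0 \<and> X z = outer u" using V_def X_ver by blast
next
  assume "\<exists>u. u \<noteq> 0 \<and> X z = outer u"
  then obtain u where "u \<noteq> 0" "X z = X (A *v ver u)" using X_ver by metis
  then show "z \<in> V" using V_def X_inject by blast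
qed

lemma mem_P_iff_X: "z \<in> P \<longleftrightarrow> z \<noteq> 0 \<and> X z *v w = 0"
  unfolding X_def by (rule mem_P_iff)

lemma polyfun_X_nth: "polyfun (\<lambda>z. X z $i$j)"
  unfolding X_def by (rule polyfun_sym_mat_nth)

lemma bil_X_scale: "bil (X (c *s z)) a b = c * bil (X z) a b"
  using bil_matrix_lincomb3[of "X (c *s z)" c "X z" 0 "X z" 0 "X z"] by (simp add: X_scale)

lemma homogeneous_kappa: "homogeneous_form 1 kappa"
  unfolding homogeneous_form_def kappa_def using polyfun_bil[OF polyfun_X_nth] bil_X_scale by simp

lemma kappa_P: "z \<in> P \<Longrightarrow> kappa z = 0"
  by (simp add: kappa_def bil_def mem_P_iff_X)

definition minor :: "3 \<Rightarrow> 3 \<Rightarrow> 3 \<Rightarrow> 3 \<Rightarrow> complex^6 \<Rightarrow> complex" where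
  "minor i j k l z = X z$i$k * X z$j$l - X z$i$l * X z$j$k"

definition gram :: "complex^3 \<Rightarrow> complex^6 \<Rightarrow> complex" where
  "gram a z = bil (X z) w w * bil (X z) a a - (bil (X z) w a)\<^sup>2"

lemma homogeneous_minor: "homogeneous_form 2 (minor i j k l)"
  unfolding homogeneous_form_def minor_def
  by (auto intro!: polyfun_diff pf_mult polyfun_X_nth simp: X_scale power2_eq_square algebra_simps)

lemma homogeneous_gram: "homogeneous_form 2 (gram a)"
  unfolding homogeneous_form_def gram_def power2_eq_square bil_X_scale
  by (auto intro!: polyfun_diff pf_mult polyfun_bil polyfun_X_nth simp: algebra_simps)

lemma homogeneous_annihilator: "homogeneous_form 1 (\<lambda>z. (X z *v w) $ k)"
proof -
  have "X (c *s z) *v w = c *s (X z *v w) + 0 *s (X z *v w) + 0 *s (X z *v w)" for c z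
    by (rule matrix_lincomb3_mult) (simp add: X_scale)
  then show ?thesis
    unfolding homogeneous_form_def using polyfun_matrix_vector_mult[OF polyfun_X_nth] by simp
qed

lemma annihilator_P: "z \<in> P \<Longrightarrow> (X z *v w) $ k = 0"
  unfolding mem_P_iff_X by simp

lemma minor_V: "z \<in> V \<Longrightarrow> minor i j k l z = 0"
  unfolding mem_V_iff minor_def by (auto simp: mult_ac)

lemma gram_V: "z \<in> V \<Longrightarrow> gram a z = 0"
  unfolding mem_V_iff gram_def by (auto simp: bil_outer power2_eq_square)

lemma rank_one_if_minors_vanish:
  assumes "\<And>i j k l. minor i j k l z = 0"
  obtains u where "X z = outer u"
  using symmetric_rank_one[OF X_symmetric] assms unfolding minor_def by blast

lemma common_zero_in_union:
  assumes "y \<noteq> 0" and zero: "\<And>F. vanishing_form (V \<union> P) F \<Longrightarrow> F y = 0"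
  shows "y \<in> V \<union> P"
proof (rule ccontr)
  assume y: "y \<notin> V \<union> P"
  then obtain k where k: "(X y *v w) $ k \<noteq> 0" using assms(1) mem_P_iff_X by (auto simp: vec_eq_iff)
  have "\<exists>i j k l. minor i j k l y \<noteq> 0"
  proof (rule ccontr)
    assume "\<not> (\<exists>i j k l. minor i j k l y \<noteq> 0)"
    then obtain u where u: "X y = outer u" using rank_one_if_minors_vanish by blast
    then have "u \<noteq> 0" using assms(1) X_eq_0_iff outer_eq_0_iff by metis
    then show False using y u mem_V_iff by blast
  qed
  then obtain i j k' l where "minor i j k' l y \<noteq> 0" by blast
  moreover have "vanishing_form (V \<union> P) (\<lambda>z. minor i j k' l z * (X z *v w) $ k)"
    by (rule vanishing_form_mult_union[OF homogeneous_minor homogeneous_annihilator minor_V annihilator_P])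
  ultimately show False using zero k by fastforce
qed

lemma kappa_det_nonzero_somewhere: obtains x where "kappa x * det (X x) \<noteq> 0"
proof -
  obtain d :: "3 \<Rightarrow> complex" where d: "d 1 * d 2 * d 3 \<noteq> 0" "d 1 * (w$1)\<^sup>2 + d 2 * (w$2)\<^sup>2 + d 3 * (w$3)\<^sup>2 \<noteq> 0"
    by (rule nonisotropic_diagonal_exists[OF w_nonzero])
  define z :: "complex^6" where "z = vector [d 1, d 2, d 3, 0, 0, 0]"
  have "X (A *v z) = sym_mat z" using BA by (simp add: X_def matrix_vector_mul_assoc)
  moreover have "bil (sym_mat z) w w = d 1 * (w$1)\<^sup>2 + d 2 * (w$2)\<^sup>2 + d 3 * (w$3)\<^sup>2"
    by (simp add: z_def bil_def dot_3 matrix_vector_mult_def sum_3 power2_eq_square algebra_simps)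
  moreover have "det (sym_mat z) = d 1 * d 2 * d 3" by (simp add: z_def det_3)
  ultimately show ?thesis using d by (intro that[of "A *v z"]) (simp add: kappa_def)
qed

definition foot_vec :: "complex^6 \<Rightarrow> complex^3" where
  "foot_vec x = (1 / csqrt (kappa x)) *s (X x *v w)"

definition foot_V :: "complex^6 \<Rightarrow> complex^6" where
  "foot_V x = A *v ver (foot_vec x)"

definition foot_P :: "complex^6 \<Rightarrow> complex^6" where
  "foot_P x = x - foot_V x"

lemma X_foot_V: "X (foot_V x) = outer (foot_vec x)"
  unfolding foot_V_def by (rule X_ver)

lemma X_foot_P: "X (foot_P x) $i$j = X x $i$j - outer (foot_vec x) $i$j"
  unfolding foot_P_def X_diff X_foot_V ..

lemma foot_V_add_foot_P: "x = 1 *s foot_V x + 1 *s foot_P x"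
  by (simp add: foot_P_def)

context
  fixes x assumes kappa_x: "kappa x \<noteq> 0" and det_x: "det (X x) \<noteq> 0"
begin

lemma csqrt_kappa: "csqrt (kappa x) * csqrt (kappa x) = kappa x" "csqrt (kappa x) \<noteq> 0"
  using power2_csqrt[of "kappa x"] kappa_x by (auto simp: power2_eq_square)

lemma dot_foot_vec: "dot (foot_vec x) w = csqrt (kappa x)"
proof -
  have "csqrt (kappa x) * dot (foot_vec x) w = csqrt (kappa x) * csqrt (kappa x)"
    using csqrt_kappa by (simp add: foot_vec_def dot_commute[of _ w] dot_scale_right kappa_def bil_def)
  then show ?thesis using csqrt_kappa(2) by simp
qed

lemma foot_vec_nonzero: "foot_vec x \<noteq> 0"
  using dot_foot_vec csqrt_kappa by auto

lemma X_foot_P_mult_w: "X (foot_P x) *v w = 0"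
proof -
  have "X (foot_P x) *v w = 1 *s (X x *v w) + (- 1) *s (outer (foot_vec x) *v w) + 0 *s (X x *v w)"
    by (rule matrix_lincomb3_mult) (simp add: X_foot_P)
  also have "\<dots> = 0"
    unfolding outer_mult dot_foot_vec using csqrt_kappa(2) by (simp add: foot_vec_def vector_smult_assoc)
  finally show ?thesis .
qed

lemma X_not_sum_of_outer: "\<not> (\<forall>i j. X x $i$j = outer u $i$j + outer v $i$j)"
  using det_outer_add det_x by blast

lemma X_foot_P_not_outer: "\<not> (\<forall>i j. X (foot_P x) $i$j = outer u $i$j)"
  using X_not_sum_of_outer[of u "foot_vec x"] by (simp add: X_foot_P diff_eq_eq)

lemma foot_V_in_V: "foot_V x \<in> V"
  using mem_V_iff X_foot_V foot_vec_nonzero by blast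

lemma foot_P_in_P: "foot_P x \<in> P"
proof -
  have "foot_P x \<noteq> 0" using X_foot_P_not_outer[of 0] X_eq_0_iff by (auto simp: vec_eq_iff)
  then show ?thesis using mem_P_iff_X X_foot_P_mult_w by blast
qed

lemma indep2_feet: "indep2 (foot_V x) (foot_P x)"
  unfolding indep2_def
proof (intro allI impI)
  fix c1 c2 assume h: "c1 *s foot_V x + c2 *s foot_P x = 0"
  have "c2 = 0"
  proof (rule ccontr)
    assume "c2 \<noteq> 0"
    then have "x = ((c2 - c1) / c2) *s foot_V x"
      using h by (simp add: foot_P_def vec_eq_iff field_simps)
    then have "X x $i$j = ((c2 - c1) / c2) * outer (foot_vec x) $i$j" for i j
      by (metis X_scale X_foot_V)
    then have "X x $i$j = outer (csqrt ((c2 - c1) / c2) *s foot_vec x) $i$j + outer 0 $i$j" for i j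
      by (simp only: outer_scale power2_csqrt) simp
    then show False using X_not_sum_of_outer by blast
  qed
  moreover have "foot_V x \<noteq> 0"
    using foot_vec_nonzero X_foot_V X_eq_0_iff outer_eq_0_iff by metis
  ultimately show "c1 = 0 \<and> c2 = 0" using h by (simp add: vector_mul_eq_0)
qed

lemma X_on_secant: "X (s *s foot_V x + t *s foot_P x) $i$j = s * outer (foot_vec x) $i$j + t * X (foot_P x) $i$j"
  unfolding X_lincomb X_foot_V ..

lemma X_on_secant_mult_w: "X (s *s foot_V x + t *s foot_P x) *v w = (s * csqrt (kappa x)) *s foot_vec x"
proof -
  have "X (s *s foot_V x + t *s foot_P x) *v w
      = s *s (outer (foot_vec x) *v w) + t *s (X (foot_P x) *v w) + 0 *s (X (foot_P x) *v w)"
    by (rule matrix_lincomb3_mult) (simp only: X_on_secant, simp)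
  then show ?thesis by (simp add: X_foot_P_mult_w outer_mult dot_foot_vec)
qed

lemma secant_meets_P_at_foot_P:
  assumes "s *s foot_V x + t *s foot_P x \<in> P" shows "s = 0"
  using assms X_on_secant_mult_w[of s t] foot_vec_nonzero csqrt_kappa(2)
  by (simp add: mem_P_iff_X vector_mul_eq_0)

lemma secant_meets_V_at_foot_V:
  assumes "s *s foot_V x + t *s foot_P x \<in> V" shows "s = 0 \<or> t = 0"
proof -
  let ?v = "foot_vec x"
  obtain u where u: "X (s *s foot_V x + t *s foot_P x) = outer u" using assms mem_V_iff by blast
  then have uw: "dot u w *s u = (s * csqrt (kappa x)) *s ?v"
    using X_on_secant_mult_w[of s t] by (simp add: outer_mult)
  show ?thesis
  proof (cases "dot u w = 0")
    case True
    then show ?thesis using uw foot_vec_nonzero csqrt_kappa(2) by (simp add: vector_mul_eq_0)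
  next
    case False
    \<comment> \<open>\<open>u u\<^sup>T = \<mu>\<^sup>2 v v\<^sup>T\<close>, so \<open>t X (foot_P x)\<close> is a multiple of \<open>v v\<^sup>T\<close> killing \<open>w\<close>, and \<open>v\<^sup>T w \<noteq> 0\<close>\<close>
    define \<mu> where "\<mu> = s * csqrt (kappa x) / dot u w"
    have "u = \<mu> *s ?v" using arg_cong[OF uw, of "(*s) (1 / dot u w)"] False
      by (simp add: \<mu>_def vector_smult_assoc)
    then have rel: "t * X (foot_P x) $i$j = (\<mu>\<^sup>2 - s) * outer ?v $i$j" for i j
      using X_on_secant[of s t i j] u by (simp add: algebra_simps power2_eq_square)
    let ?N = "\<chi> i j. t * X (foot_P x) $i$j"
    have "?N *v w = t *s (X (foot_P x) *v w) + 0 *s (X (foot_P x) *v w) + 0 *s (X (foot_P x) *v w)"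
      by (rule matrix_lincomb3_mult) simp
    moreover have "?N *v w = (\<mu>\<^sup>2 - s) *s (outer ?v *v w) + 0 *s (outer ?v *v w) + 0 *s (outer ?v *v w)"
      by (rule matrix_lincomb3_mult) (simp add: rel del: outer_nth)
    ultimately have "((\<mu>\<^sup>2 - s) * csqrt (kappa x)) *s ?v = 0"
      by (simp add: X_foot_P_mult_w outer_mult dot_foot_vec vector_smult_assoc)
    then have "\<mu>\<^sup>2 - s = 0"
      using foot_vec_nonzero csqrt_kappa(2) by (simp add: vector_mul_eq_0)
    then have "t * X (foot_P x) $i$j = 0" for i j using rel by simp
    then show ?thesis using X_foot_P_not_outer[of 0] by auto
  qed
qed

lemma zero_locus_on_secant:
  assumes y: "y \<in> line_through (foot_V x) (foot_P x)" "y \<noteq> 0"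
  shows "(\<forall>F. vanishing_form (V \<union> P) F \<longrightarrow> F y = 0) \<longleftrightarrow> (\<exists>c. y = c *s foot_V x \<or> y = c *s foot_P x)"
proof
  assume "\<exists>c. y = c *s foot_V x \<or> y = c *s foot_P x"
  then show "\<forall>F. vanishing_form (V \<union> P) F \<longrightarrow> F y = 0"
    using vanishing_form_scale foot_V_in_V foot_P_in_P by blast
next
  assume "\<forall>F. vanishing_form (V \<union> P) F \<longrightarrow> F y = 0"
  then have "y \<in> V \<union> P" using common_zero_in_union y(2) by blast
  moreover obtain s t where y_st: "y = s *s foot_V x + t *s foot_P x"
    using y(1) unfolding line_through_def by blast
  ultimately have "s = 0 \<or> t = 0"
    using secant_meets_P_at_foot_P secant_meets_V_at_foot_V by blast
  then show "\<exists>c. y = c *s foot_V x \<or> y = c *s foot_P x" using y_st by auto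
qed

lemma bil_on_secant:
  "bil (X (s *s foot_V x + t *s foot_P x)) c d = s * bil (outer (foot_vec x)) c d + t * bil (X (foot_P x)) c d"
  using bil_matrix_lincomb3[of "X (s *s foot_V x + t *s foot_P x)" s "outer (foot_vec x)" t "X (foot_P x)" 0]
  by (simp add: X_on_secant)

lemma bil_foot_P_w: "bil (X (foot_P x)) d w = 0" "bil (X (foot_P x)) w d = 0"
proof -
  show "bil (X (foot_P x)) d w = 0" by (simp add: bil_def X_foot_P_mult_w)
  then show "bil (X (foot_P x)) w d = 0" by (simp add: bil_symmetric[OF transpose_X])
qed

lemma kappa_on_secant: "kappa (s *s foot_V x + t *s foot_P x) = s * kappa x"
proof -
  have "kappa (s *s foot_V x + t *s foot_P x) = s * (csqrt (kappa x) * csqrt (kappa x))"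
    unfolding kappa_def[of "s *s foot_V x + t *s foot_P x"] bil_on_secant bil_foot_P_w bil_outer
      dot_commute[of w] dot_foot_vec by simp
  then show ?thesis using csqrt_kappa by simp
qed

text \<open>Along the secant, \<open>gram a \<cdot> kappa\<close> vanishes to first order at \<open>foot_V x\<close>, and
  \<open>minor i j k l \<cdot> kappa\<close> to first order at \<open>foot_P x\<close>.\<close>

lemma simple_at_foot_V: "simple_at (V \<union> P) (foot_V x) (foot_P x)"
proof -
  have "X (foot_P x) \<noteq> 0" using X_foot_P_not_outer[of 0] by (auto simp: vec_eq_iff)
  then obtain a where a: "bil (X (foot_P x)) a a \<noteq> 0"
    using symmetric_nonzero_bil_diagonal[OF X_symmetric] by blast
  have "poly ([:0, 1:] * [:kappa x * kappa x * bil (X (foot_P x)) a a:]) t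
      = gram a (foot_V x + t *s foot_P x) * kappa (foot_V x + t *s foot_P x)" for t
    using kappa_on_secant[of 1 t] bil_on_secant[of 1 t] csqrt_kappa
    by (simp add: gram_def bil_foot_P_w bil_outer dot_commute[of w] dot_foot_vec power2_eq_square algebra_simps)
  moreover have "vanishing_form (V \<union> P) (\<lambda>z. gram a z * kappa z)"
    by (rule vanishing_form_mult_union[OF homogeneous_gram homogeneous_kappa gram_V kappa_P])
  moreover have "order 0 ([:0, 1:] * [:kappa x * kappa x * bil (X (foot_P x)) a a:]) = 1"
    by (rule order_0_linear_factor) (simp add: kappa_x a)
  ultimately show ?thesis unfolding simple_at_def by blast
qed

lemma simple_at_foot_P: "simple_at (V \<union> P) (foot_P x) (foot_V x)"
proof -
  have "\<exists>i j k l. minor i j k l (foot_P x) \<noteq> 0"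
  proof (rule ccontr)
    assume "\<not> (\<exists>i j k l. minor i j k l (foot_P x) \<noteq> 0)"
    then obtain u where "X (foot_P x) = outer u" using rank_one_if_minors_vanish by blast
    then show False using X_foot_P_not_outer[of u] by simp
  qed
  then obtain i j k l where m: "minor i j k l (foot_P x) \<noteq> 0" by blast
  let ?M = "X (foot_P x)" and ?N = "outer (foot_vec x)"
  define m1 where "m1 = ?M$i$k * ?N$j$l + ?N$i$k * ?M$j$l - ?M$i$l * ?N$j$k - ?N$i$l * ?M$j$k"
  define m2 where "m2 = ?N$i$k * ?N$j$l - ?N$i$l * ?N$j$k"
  have "poly ([:0, 1:] * [:kappa x * minor i j k l (foot_P x), kappa x * m1, kappa x * m2:]) t
      = minor i j k l (foot_P x + t *s foot_V x) * kappa (foot_P x + t *s foot_V x)" for t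
  proof -
    have "foot_P x + t *s foot_V x = t *s foot_V x + 1 *s foot_P x" by simp
    then show ?thesis unfolding minor_def using X_on_secant[of t 1] kappa_on_secant[of t 1]
      by (simp add: m1_def m2_def algebra_simps del: outer_nth)
  qed
  moreover have "vanishing_form (V \<union> P) (\<lambda>z. minor i j k l z * kappa z)"
    by (rule vanishing_form_mult_union[OF homogeneous_minor homogeneous_kappa minor_V kappa_P])
  moreover have "order 0 ([:0, 1:] * [:kappa x * minor i j k l (foot_P x), kappa x * m1, kappa x * m2:]) = 1"
    by (rule order_0_linear_factor) (simp add: kappa_x m)
  ultimately show ?thesis unfolding simple_at_def by blast
qed

lemma secant_line_through_feet: "secant_line (V \<union> P) (line_through (foot_V x) (foot_P x))"
proof -
  have "foot_V x \<in> line_through (foot_V x) (foot_P x)" "foot_P x \<in> line_through (foot_V x) (foot_P x)"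
    using lincomb_in_line_through[of 1 _ 0] lincomb_in_line_through[of 0 _ 1] by simp_all
  then show ?thesis unfolding secant_line_def
    using indep2_feet zero_locus_on_secant simple_at_foot_V simple_at_foot_P by blast
qed

lemma secant_decomposition_unique:
  assumes p1: "p1 \<in> V" and q1: "q1 \<in> P" and x: "x = s *s p1 + t *s q1"
  shows "foot_V x = s *s p1" "foot_P x = t *s q1"
proof -
  obtain v1 where v1: "X p1 = outer v1" using p1 mem_V_iff by blast
  have q1w: "X q1 *v w = 0" using q1 mem_P_iff_X by blast
  define \<delta> where "\<delta> = dot v1 w"
  have Xx: "X x $i$j = s * outer v1 $i$j + t * X q1 $i$j" for i j unfolding x X_lincomb v1 ..
  have "X x *v w = s *s (outer v1 *v w) + t *s (X q1 *v w) + 0 *s (X q1 *v w)"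
    by (rule matrix_lincomb3_mult) (simp only: Xx, simp)
  then have Xxw: "X x *v w = (s * \<delta>) *s v1" by (simp add: q1w outer_mult \<delta>_def vector_smult_assoc)
  have kappa_s: "kappa x = s * \<delta> * \<delta>"
    by (simp add: kappa_def bil_def Xxw dot_scale_right dot_commute[of w] \<delta>_def)
  then have "s \<noteq> 0" "\<delta> \<noteq> 0" using kappa_x by auto
  have foot_vec_x: "foot_vec x = (s * \<delta> / csqrt (kappa x)) *s v1"
    unfolding foot_vec_def Xxw by (simp add: vector_smult_assoc)
  have scale: "(s * \<delta> / csqrt (kappa x))\<^sup>2 = s"
    using csqrt_kappa kappa_s \<open>s \<noteq> 0\<close> \<open>\<delta> \<noteq> 0\<close> by (simp add: power2_eq_square field_simps)
  have "X (foot_V x) $i$j = X (s *s p1) $i$j" for i j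
    unfolding X_foot_V foot_vec_x outer_scale scale X_scale v1 ..
  then have "X (foot_V x) = X (s *s p1)" by (simp add: vec_eq_iff del: outer_nth)
  then show "foot_V x = s *s p1" by (simp add: X_inject)
  then show "foot_P x = t *s q1" by (simp add: foot_P_def x)
qed

lemma secant_line_unique:
  assumes L: "secant_line (V \<union> P) L" and "x \<in> L"
  shows "L = line_through (foot_V x) (foot_P x)"
proof -
  obtain p1 q1 where pq1: "indep2 p1 q1" and L_eq: "L = line_through p1 q1"
    and zeros: "\<And>F. vanishing_form (V \<union> P) F \<Longrightarrow> F p1 = 0" "\<And>F. vanishing_form (V \<union> P) F \<Longrightarrow> F q1 = 0"
    using secant_line_endpoints[OF L] by blast
  have "p1 \<in> V \<union> P" "q1 \<in> V \<union> P"
    using common_zero_in_union zeros indep2_nonzero[OF pq1] by blast+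
  obtain s t where x: "x = s *s p1 + t *s q1" using \<open>x \<in> L\<close> L_eq unfolding line_through_def by blast
  have mixed: "line_through p q = line_through (foot_V x) (foot_P x)"
    if "p \<in> V" "q \<in> P" "x = a *s p + b *s q" for p q a b
  proof -
    have "foot_V x = a *s p" "foot_P x = b *s q" using secant_decomposition_unique that by blast+
    moreover have "a \<noteq> 0" "b \<noteq> 0" using calculation indep2_nonzero[OF indep2_feet] by auto
    ultimately show ?thesis using line_through_scale by simp
  qed
  consider "p1 \<in> V" "q1 \<in> V" | "p1 \<in> P" "q1 \<in> P" | "p1 \<in> V" "q1 \<in> P" | "p1 \<in> P" "q1 \<in> V"
    using \<open>p1 \<in> V \<union> P\<close> \<open>q1 \<in> V \<union> P\<close> by blast
  then show ?thesis
  proof cases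
    case 1
    then obtain v1 v2 where "X p1 = outer v1" "X q1 = outer v2" using mem_V_iff by metis
    then have "X x $i$j = outer (csqrt s *s v1) $i$j + outer (csqrt t *s v2) $i$j" for i j
      unfolding x X_lincomb outer_scale by (simp add: power2_csqrt del: outer_nth)
    then show ?thesis using X_not_sum_of_outer by blast
  next
    case 2
    have "X x *v w = s *s (X p1 *v w) + t *s (X q1 *v w) + 0 *s (X q1 *v w)"
      by (rule matrix_lincomb3_mult) (simp add: x X_lincomb)
    then have "kappa x = 0" using 2 by (simp add: mem_P_iff_X kappa_def bil_def)
    then show ?thesis using kappa_x by blast
  next
    case 3
    then show ?thesis using mixed x L_eq by blast
  next
    case 4
    then show ?thesis using mixed[of q1 p1 t s] x L_eq line_through_commute by (simp add: add.commute)
  qed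
qed

lemma unique_secant_line: "\<exists>!L. secant_line (V \<union> P) L \<and> x \<in> L"
proof -
  have "x \<in> line_through (foot_V x) (foot_P x)"
    using foot_V_add_foot_P lincomb_in_line_through by metis
  then show ?thesis using secant_line_through_feet secant_line_unique by blast
qed

end

end

theorem proposition4p2:
  fixes V P :: "(complex^6) set"
  assumes "is_veronese V" and "is_plane P" and "smooth_conic_in P (V \<inter> P)"
  shows "\<exists>g. polyfun g \<and> (\<exists>x. g x \<noteq> 0) \<and>
           (\<forall>x. x \<noteq> 0 \<and> g x \<noteq> 0 \<longrightarrow> (\<exists>!L. secant_line (V \<union> P) L \<and> x \<in> L))"
proof -
  obtain A where "invertible A" and V: "V = {A *v ver y | y. y \<noteq> 0}"
    using assms(1) unfolding is_veronese_def by blast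
  then obtain B where AB: "A ** B = mat 1" and BA: "B ** A = mat 1" unfolding invertible_def by blast
  \<comment> \<open>\<open>is_plane P\<close> is implied by \<open>smooth_conic_in P (V \<inter> P)\<close>\<close>
  obtain w where "w \<noteq> 0" "\<And>z. z \<in> P \<longleftrightarrow> z \<noteq> 0 \<and> sym_mat (B *v z) *v w = 0"
    using conic_plane_annihilator[OF BA AB V assms(3)] by blast
  then interpret veronese_conic_plane A B w V P
    using AB BA V by unfold_locales
  define g where "g x = kappa x * det (X x)" for x
  have "polyfun g"
    unfolding g_def using homogeneous_kappa
    by (intro pf_mult polyfun_det3 polyfun_X_nth) (simp add: homogeneous_form_def)
  moreover have "\<exists>x. g x \<noteq> 0"
    using kappa_det_nonzero_somewhere unfolding g_def by blast
  moreover have "\<exists>!L. secant_line (V \<union> P) L \<and> x \<in> L" if "g x \<noteq> 0" for x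
    using that unique_secant_line unfolding g_def by simp
  ultimately show ?thesis by blast
qed

end
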